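(* Assume $\sum_{j=1}^\infty\beta_j^2<\infty$ and $|\rho|<1$, and for $k=1,\dots,p$ let $\theta_k^{(p)}=\sum_{j=1}^p\beta_j\rho^{|k-j|}$. Then, as $p\to\infty$, $$\Big|\sum_{i,j,k=1}^p\big(\rho^{|i-j|}+\theta_i^{(p)}\theta_j^{(p)}\big)\big(\rho^{|i-k|}+\theta_i^{(p)}\theta_k^{(p)}\big)\big(\rho^{|k-j|}+\theta_k^{(p)}\theta_j^{(p)}\big)\Big|=o(p^{3/2}).$$ *)

theory Defs
  imports "HOL-Analysis.Analysis" "HOL-Library.Landau_Symbols"
begin

definition theta :: "(nat \<Rightarrow> real) \<Rightarrow> real \<Rightarrow> nat \<Rightarrow> nat \<Rightarrow> real" where
  "theta \<beta> \<rho> p k = (\<Sum>j=1..p. \<beta> j * \<rho> ^ nat \<bar>int k - int j\<bar>)"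

definition tripleSum :: "(nat \<Rightarrow> real) \<Rightarrow> real \<Rightarrow> nat \<Rightarrow> real" where
  "tripleSum \<beta> \<rho> p = (\<Sum>i=1..p. \<Sum>j=1..p. \<Sum>k=1..p.
     (\<rho> ^ nat \<bar>int i - int j\<bar> + theta \<beta> \<rho> p i * theta \<beta> \<rho> p j) *
     (\<rho> ^ nat \<bar>int i - int k\<bar> + theta \<beta> \<rho> p i * theta \<beta> \<rho> p k) *
     (\<rho> ^ nat \<bar>int k - int j\<bar> + theta \<beta> \<rho> p k * theta \<beta> \<rho> p j))"

end

theory Submission
  imports Defs "HOL-Real_Asymp.Real_Asymp"
begin

text \<open>Write \<open>W i j = \<rho> ^ |i - j|\<close> and \<open>u = \<theta>\<close>. The summand is built from the entries of the
  rank-one update \<open>M = W + u u\<^sup>T\<close>, so the triple sum is \<open>tr (M ^ 3)\<close>, and expanding the cube gives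
  \<open>tr (W ^ 3) + 3 |W u|\<^sup>2 + 3 |u|\<^sup>2 (u\<^sup>T W u) + |u| ^ 6\<close>. The entries of \<open>W\<close> are at most 1 and
  its absolute row sums at most \<open>2 / (1 - |\<rho>|)\<close>, so \<open>|tr (W ^ 3)| = O(p)\<close>; by the Schur test
  \<open>|\<theta>| = |W \<beta>| \<le> 2 |\<beta>| / (1 - |\<rho>|)\<close> stays bounded, so the other three terms are \<open>O(1)\<close>.
  Thus the sum is even \<open>O(p)\<close>.\<close>

lemma weighted_Cauchy_Schwarz_sum:
  fixes v x :: "'a \<Rightarrow> real"
  assumes "\<And>j. j \<in> I \<Longrightarrow> 0 \<le> v j"
  shows "(\<Sum>j\<in>I. v j * x j)\<^sup>2 \<le> (\<Sum>j\<in>I. v j) * (\<Sum>j\<in>I. v j * (x j)\<^sup>2)"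
proof -
  have "(\<Sum>j\<in>I. sqrt (v j) * (sqrt (v j) * x j))\<^sup>2
      \<le> (\<Sum>j\<in>I. (sqrt (v j))\<^sup>2) * (\<Sum>j\<in>I. (sqrt (v j) * x j)\<^sup>2)"
    by (rule Cauchy_Schwarz_ineq_sum)
  moreover have "sqrt (v j) * (sqrt (v j) * x j) = v j * x j" "(sqrt (v j))\<^sup>2 = v j"
    "(sqrt (v j) * x j)\<^sup>2 = v j * (x j)\<^sup>2" if "j \<in> I" for j
    using assms[OF that] by (auto simp: power_mult_distrib mult.assoc[symmetric])
  ultimately show ?thesis by simp
qed

lemma sum_matrix_vector_square_le:
  fixes w :: "'a \<Rightarrow> 'a \<Rightarrow> real" and x :: "'a \<Rightarrow> real"
  assumes rows: "\<And>i. i \<in> I \<Longrightarrow> (\<Sum>j\<in>I. \<bar>w i j\<bar>) \<le> c"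
    and cols: "\<And>j. j \<in> I \<Longrightarrow> (\<Sum>i\<in>I. \<bar>w i j\<bar>) \<le> c"
    and "0 \<le> c"
  shows "(\<Sum>i\<in>I. (\<Sum>j\<in>I. w i j * x j)\<^sup>2) \<le> c\<^sup>2 * (\<Sum>j\<in>I. (x j)\<^sup>2)"
proof -
  have "(\<Sum>j\<in>I. w i j * x j)\<^sup>2 \<le> c * (\<Sum>j\<in>I. \<bar>w i j\<bar> * (x j)\<^sup>2)" if "i \<in> I" for i
  proof -
    have "\<bar>\<Sum>j\<in>I. w i j * x j\<bar> \<le> (\<Sum>j\<in>I. \<bar>w i j\<bar> * \<bar>x j\<bar>)"
      by (rule order.trans[OF sum_abs]) (simp add: abs_mult)
    then have "(\<Sum>j\<in>I. w i j * x j)\<^sup>2 \<le> (\<Sum>j\<in>I. \<bar>w i j\<bar> * \<bar>x j\<bar>)\<^sup>2"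
      by (metis abs_ge_zero power2_abs power_mono)
    also have "\<dots> \<le> (\<Sum>j\<in>I. \<bar>w i j\<bar>) * (\<Sum>j\<in>I. \<bar>w i j\<bar> * (x j)\<^sup>2)"
      using weighted_Cauchy_Schwarz_sum[of I "\<lambda>j. \<bar>w i j\<bar>" "\<lambda>j. \<bar>x j\<bar>"] by simp
    also have "\<dots> \<le> c * (\<Sum>j\<in>I. \<bar>w i j\<bar> * (x j)\<^sup>2)"
      by (rule mult_right_mono) (auto intro: rows[OF that] sum_nonneg)
    finally show ?thesis .
  qed
  then have "(\<Sum>i\<in>I. (\<Sum>j\<in>I. w i j * x j)\<^sup>2) \<le> c * (\<Sum>i\<in>I. \<Sum>j\<in>I. \<bar>w i j\<bar> * (x j)\<^sup>2)"
    by (auto intro: sum_mono simp: sum_distrib_left)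
  also have "(\<Sum>i\<in>I. \<Sum>j\<in>I. \<bar>w i j\<bar> * (x j)\<^sup>2) = (\<Sum>j\<in>I. (x j)\<^sup>2 * (\<Sum>i\<in>I. \<bar>w i j\<bar>))"
    by (subst sum.swap) (simp add: sum_distrib_left mult.commute)
  also have "\<dots> \<le> (\<Sum>j\<in>I. (x j)\<^sup>2 * c)"
    by (intro sum_mono mult_left_mono cols) auto
  also have "c * (\<Sum>j\<in>I. (x j)\<^sup>2 * c) = c\<^sup>2 * (\<Sum>j\<in>I. (x j)\<^sup>2)"
    by (simp add: sum_distrib_right[symmetric] power2_eq_square)
  finally show ?thesis
    using \<open>0 \<le> c\<close> by (simp add: mult_left_mono)
qed

lemma quadratic_form_abs_le:
  fixes w :: "'a \<Rightarrow> 'a \<Rightarrow> real" and x :: "'a \<Rightarrow> real"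
  assumes rows: "\<And>i. i \<in> I \<Longrightarrow> (\<Sum>j\<in>I. \<bar>w i j\<bar>) \<le> c"
    and cols: "\<And>j. j \<in> I \<Longrightarrow> (\<Sum>i\<in>I. \<bar>w i j\<bar>) \<le> c"
  shows "\<bar>\<Sum>i\<in>I. \<Sum>j\<in>I. w i j * x i * x j\<bar> \<le> c * (\<Sum>i\<in>I. (x i)\<^sup>2)"
proof -
  have "\<bar>\<Sum>i\<in>I. \<Sum>j\<in>I. w i j * x i * x j\<bar>
      \<le> (\<Sum>i\<in>I. \<Sum>j\<in>I. \<bar>w i j\<bar> * (((x i)\<^sup>2 + (x j)\<^sup>2) / 2))"
  proof (intro order.trans[OF sum_abs] sum_mono order.trans[OF sum_abs])
    fix i j
    have "\<bar>x i * x j\<bar> \<le> ((x i)\<^sup>2 + (x j)\<^sup>2) / 2"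
      using sum_squares_bound[of "\<bar>x i\<bar>" "\<bar>x j\<bar>"] by (simp add: abs_mult)
    then show "\<bar>w i j * x i * x j\<bar> \<le> \<bar>w i j\<bar> * (((x i)\<^sup>2 + (x j)\<^sup>2) / 2)"
      by (simp add: abs_mult mult.assoc mult_left_mono)
  qed
  also have "\<dots> = ((\<Sum>i\<in>I. \<Sum>j\<in>I. \<bar>w i j\<bar> * (x i)\<^sup>2) + (\<Sum>i\<in>I. \<Sum>j\<in>I. \<bar>w i j\<bar> * (x j)\<^sup>2)) / 2"
    by (simp add: distrib_left add_divide_distrib sum.distrib sum_divide_distrib)
  also have "(\<Sum>i\<in>I. \<Sum>j\<in>I. \<bar>w i j\<bar> * (x i)\<^sup>2) = (\<Sum>i\<in>I. (x i)\<^sup>2 * (\<Sum>j\<in>I. \<bar>w i j\<bar>))"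
    by (simp add: sum_distrib_left mult.commute)
  also have "(\<Sum>i\<in>I. \<Sum>j\<in>I. \<bar>w i j\<bar> * (x j)\<^sup>2) = (\<Sum>j\<in>I. (x j)\<^sup>2 * (\<Sum>i\<in>I. \<bar>w i j\<bar>))"
    by (subst sum.swap) (simp add: sum_distrib_left mult.commute)
  also have "((\<Sum>i\<in>I. (x i)\<^sup>2 * (\<Sum>j\<in>I. \<bar>w i j\<bar>)) + (\<Sum>j\<in>I. (x j)\<^sup>2 * (\<Sum>i\<in>I. \<bar>w i j\<bar>))) / 2
      \<le> ((\<Sum>i\<in>I. (x i)\<^sup>2 * c) + (\<Sum>j\<in>I. (x j)\<^sup>2 * c)) / 2"
    by (intro divide_right_mono add_mono sum_mono mult_left_mono rows cols) auto
  finally show ?thesis by (simp only: sum_distrib_right[symmetric]) (simp add: mult.commute)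
qed

lemma sum_cube_abs_le:
  fixes w :: "'a \<Rightarrow> 'a \<Rightarrow> real" and c :: real
  assumes bounded: "\<And>i j. \<bar>w i j\<bar> \<le> 1"
    and rows: "\<And>i. i \<in> I \<Longrightarrow> (\<Sum>j\<in>I. \<bar>w i j\<bar>) \<le> c"
  shows "\<bar>\<Sum>i\<in>I. \<Sum>j\<in>I. \<Sum>k\<in>I. w i j * w i k * w k j\<bar> \<le> card I * c\<^sup>2"
proof -
  have "\<bar>\<Sum>i\<in>I. \<Sum>j\<in>I. \<Sum>k\<in>I. w i j * w i k * w k j\<bar>
      \<le> (\<Sum>i\<in>I. \<Sum>j\<in>I. \<Sum>k\<in>I. \<bar>w i j\<bar> * \<bar>w i k\<bar>)"
    by (intro order.trans[OF sum_abs] sum_mono)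
      (auto simp: abs_mult intro!: mult_left_le mult_nonneg_nonneg bounded)
  also have "\<dots> = (\<Sum>i\<in>I. (\<Sum>j\<in>I. \<bar>w i j\<bar>) * (\<Sum>k\<in>I. \<bar>w i k\<bar>))"
    by (simp add: sum_product)
  also have "\<dots> \<le> (\<Sum>i\<in>I. c * c)"
    by (intro sum_mono mult_mono rows) (auto intro: sum_nonneg order.trans[OF _ rows])
  finally show ?thesis by (simp add: power2_eq_square)
qed

lemma sum_cube_rank_one_update:
  fixes w :: "'a \<Rightarrow> 'a \<Rightarrow> real" and u :: "'a \<Rightarrow> real" and I :: "'a set"
  assumes sym: "\<And>i j. w i j = w j i"
  defines "q \<equiv> \<Sum>i\<in>I. (u i)\<^sup>2"
  shows "(\<Sum>i\<in>I. \<Sum>j\<in>I. \<Sum>k\<in>I. (w i j + u i * u j) * (w i k + u i * u k) * (w k j + u k * u j))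
       = (\<Sum>i\<in>I. \<Sum>j\<in>I. \<Sum>k\<in>I. w i j * w i k * w k j)
         + 3 * (\<Sum>i\<in>I. (\<Sum>j\<in>I. w i j * u j)\<^sup>2)
         + 3 * q * (\<Sum>i\<in>I. \<Sum>j\<in>I. w i j * u i * u j) + q ^ 3"
proof -
  define N where "N = (\<Sum>i\<in>I. (\<Sum>j\<in>I. w i j * u j)\<^sup>2)"
  define Q where "Q = (\<Sum>i\<in>I. \<Sum>j\<in>I. w i j * u i * u j)"
  have expand: "(w i j + u i * u j) * (w i k + u i * u k) * (w k j + u k * u j)
      = w i j * w i k * w k j
        + (w i j * w i k * (u j * u k) + w i j * w k j * (u i * u k) + w i k * w k j * (u i * u j))
        + (w i j * u i * u j * (u k)\<^sup>2 + w i k * u i * u k * (u j)\<^sup>2 + w k j * u k * u j * (u i)\<^sup>2)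
        + (u i)\<^sup>2 * (u j)\<^sup>2 * (u k)\<^sup>2" for i j k
    by (simp add: algebra_simps power2_eq_square)
  have quad1: "(\<Sum>i\<in>I. \<Sum>j\<in>I. \<Sum>k\<in>I. w i j * w i k * (u j * u k)) = N"
    by (simp add: N_def power2_eq_square sum_distrib_left sum_distrib_right mult_ac)
  have quad2: "(\<Sum>i\<in>I. \<Sum>j\<in>I. \<Sum>k\<in>I. w i j * w k j * (u i * u k)) = N"
    unfolding quad1[symmetric] by (subst sum.swap) (simp add: sym)
  have quad3: "(\<Sum>i\<in>I. \<Sum>j\<in>I. \<Sum>k\<in>I. w i k * w k j * (u i * u j)) = N"
    unfolding quad1[symmetric] by (subst (2) sum.swap) (subst sum.swap, simp add: sym)
  have quart1: "(\<Sum>i\<in>I. \<Sum>j\<in>I. \<Sum>k\<in>I. w i j * u i * u j * (u k)\<^sup>2) = q * Q"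
    by (simp add: q_def Q_def sum_distrib_left sum_distrib_right mult_ac)
  have quart2: "(\<Sum>i\<in>I. \<Sum>j\<in>I. \<Sum>k\<in>I. w i k * u i * u k * (u j)\<^sup>2) = q * Q"
    unfolding quart1[symmetric] by (subst (2) sum.swap) simp
  have "(\<Sum>i\<in>I. \<Sum>j\<in>I. \<Sum>k\<in>I. w k j * u k * u j * (u i)\<^sup>2)
      = (\<Sum>i\<in>I. (u i)\<^sup>2 * (\<Sum>j\<in>I. \<Sum>k\<in>I. w k j * u k * u j))"
    by (simp add: sum_distrib_left mult_ac)
  also have "(\<Sum>j\<in>I. \<Sum>k\<in>I. w k j * u k * u j) = Q"
    unfolding Q_def by (rule sum.swap)
  finally have quart3: "(\<Sum>i\<in>I. \<Sum>j\<in>I. \<Sum>k\<in>I. w k j * u k * u j * (u i)\<^sup>2) = q * Q"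
    by (simp add: q_def sum_distrib_right)
  have sext: "(\<Sum>i\<in>I. \<Sum>j\<in>I. \<Sum>k\<in>I. (u i)\<^sup>2 * (u j)\<^sup>2 * (u k)\<^sup>2) = q ^ 3"
    by (simp add: q_def power3_eq_cube sum_distrib_left sum_distrib_right mult_ac)
  show ?thesis
    unfolding expand sum.distrib quad1 quad2 quad3 quart1 quart2 quart3 sext
    by (simp add: N_def Q_def)
qed

lemma sum_cube_rank_one_update_abs_le:
  fixes w :: "'a \<Rightarrow> 'a \<Rightarrow> real" and u :: "'a \<Rightarrow> real" and c T :: real
  assumes sym: "\<And>i j. w i j = w j i"
    and bounded: "\<And>i j. \<bar>w i j\<bar> \<le> 1"
    and rows: "\<And>i. i \<in> I \<Longrightarrow> (\<Sum>j\<in>I. \<bar>w i j\<bar>) \<le> c"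
    and "0 \<le> c"
    and energy: "(\<Sum>i\<in>I. (u i)\<^sup>2) \<le> T"
  shows "\<bar>\<Sum>i\<in>I. \<Sum>j\<in>I. \<Sum>k\<in>I. (w i j + u i * u j) * (w i k + u i * u k) * (w k j + u k * u j)\<bar>
    \<le> card I * c\<^sup>2 + 3 * c\<^sup>2 * T + 3 * c * T\<^sup>2 + T ^ 3"
proof -
  define q where "q = (\<Sum>i\<in>I. (u i)\<^sup>2)"
  have cols: "(\<Sum>i\<in>I. \<bar>w i j\<bar>) \<le> c" if "j \<in> I" for j
    using rows[OF that] by (simp add: sym)
  have "0 \<le> q" by (simp add: q_def sum_nonneg)
  have "q \<le> T" using energy by (simp add: q_def)
  have cube: "\<bar>\<Sum>i\<in>I. \<Sum>j\<in>I. \<Sum>k\<in>I. w i j * w i k * w k j\<bar> \<le> card I * c\<^sup>2"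
    by (rule sum_cube_abs_le[OF bounded rows])
  have linear: "(\<Sum>i\<in>I. (\<Sum>j\<in>I. w i j * u j)\<^sup>2) \<le> c\<^sup>2 * T"
    using sum_matrix_vector_square_le[OF rows cols \<open>0 \<le> c\<close>, of u] \<open>q \<le> T\<close>
    by (simp add: q_def mult_left_mono order.trans)
  have "\<bar>\<Sum>i\<in>I. \<Sum>j\<in>I. w i j * u i * u j\<bar> \<le> c * q"
    unfolding q_def by (rule quadratic_form_abs_le[OF rows cols])
  then have "\<bar>q * (\<Sum>i\<in>I. \<Sum>j\<in>I. w i j * u i * u j)\<bar> \<le> q * (c * q)"
    using \<open>0 \<le> q\<close> by (simp add: abs_mult mult_left_mono)
  also have "\<dots> = c * q\<^sup>2" by (simp add: power2_eq_square)
  also have "\<dots> \<le> c * T\<^sup>2"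
    using \<open>0 \<le> q\<close> \<open>q \<le> T\<close> \<open>0 \<le> c\<close> by (intro mult_left_mono power_mono) auto
  finally have quadratic: "\<bar>q * (\<Sum>i\<in>I. \<Sum>j\<in>I. w i j * u i * u j)\<bar> \<le> c * T\<^sup>2" .
  have "q ^ 3 \<le> T ^ 3" using \<open>0 \<le> q\<close> \<open>q \<le> T\<close> by (simp add: power_mono)
  moreover have "0 \<le> (\<Sum>i\<in>I. (\<Sum>j\<in>I. w i j * u j)\<^sup>2)" "0 \<le> q ^ 3"
    using \<open>0 \<le> q\<close> by (simp_all add: sum_nonneg)
  ultimately show ?thesis
    using cube linear quadratic
    unfolding sum_cube_rank_one_update[OF sym, where u = u and I = I, folded q_def]
    by (simp only: mult.assoc abs_le_iff) linarith
qed

lemma sum_power_inj_on_le: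
  fixes a :: real
  assumes "0 \<le> a" "a < 1" "finite S" "inj_on h S"
  shows "(\<Sum>j\<in>S. a ^ h j) \<le> 1 / (1 - a)"
proof -
  have "(\<Sum>j\<in>S. a ^ h j) = (\<Sum>n\<in>h ` S. a ^ n)"
    using sum.reindex[OF assms(4), of "\<lambda>n. a ^ n"] by simp
  also have "\<dots> \<le> (\<Sum>n. a ^ n)"
    by (rule sum_le_suminf) (use assms in \<open>auto intro: summable_geometric\<close>)
  also have "\<dots> = 1 / (1 - a)" using suminf_geometric[of a] assms by simp
  finally show ?thesis .
qed

lemma sum_power_dist_le:
  fixes a :: real and J :: "nat set"
  assumes "0 \<le> a" "a < 1" "finite J"
  shows "(\<Sum>j\<in>J. a ^ nat \<bar>int i - int j\<bar>) \<le> 2 / (1 - a)"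
proof -
  let ?L = "J \<inter> {..i}" and ?R = "J - {..i}"
  have "(\<Sum>j\<in>J. a ^ nat \<bar>int i - int j\<bar>) = (\<Sum>j\<in>?L. a ^ (i - j)) + (\<Sum>j\<in>?R. a ^ (j - i))"
    by (subst sum.Int_Diff[OF \<open>finite J\<close>, of _ "{..i}"], intro arg_cong2[where f = "(+)"] sum.cong)
      (auto simp: nat_diff_distrib of_nat_diff)
  also have "\<dots> \<le> 1 / (1 - a) + 1 / (1 - a)"
    by (intro add_mono sum_power_inj_on_le) (use assms in \<open>auto simp: inj_on_def\<close>)
  finally show ?thesis by simp
qed

lemma sum_theta_square_le:
  fixes \<beta> :: "nat \<Rightarrow> real" and \<rho> :: real
  assumes "\<bar>\<rho>\<bar> < 1"
  shows "(\<Sum>k=1..p. (theta \<beta> \<rho> p k)\<^sup>2) \<le> (2 / (1 - \<bar>\<rho>\<bar>))\<^sup>2 * (\<Sum>j=1..p. (\<beta> j)\<^sup>2)"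
proof -
  define w where "w i j = \<rho> ^ nat \<bar>int i - int j\<bar>" for i j :: nat
  have rows: "(\<Sum>j\<in>{1..p}. \<bar>w i j\<bar>) \<le> 2 / (1 - \<bar>\<rho>\<bar>)" for i
    unfolding w_def power_abs by (rule sum_power_dist_le) (use assms in auto)
  have cols: "(\<Sum>i\<in>{1..p}. \<bar>w i j\<bar>) \<le> 2 / (1 - \<bar>\<rho>\<bar>)" for j
    using rows[of j] by (simp add: w_def abs_minus_commute)
  have "theta \<beta> \<rho> p k = (\<Sum>j=1..p. w k j * \<beta> j)" for k
    by (simp add: theta_def w_def mult.commute)
  then show ?thesis
    using sum_matrix_vector_square_le[OF rows cols, of \<beta>] assms by simp
qed

lemma tripleSum_abs_le:
  fixes \<beta> :: "nat \<Rightarrow> real" and \<rho> :: real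
  assumes "summable (\<lambda>j. (\<beta> (Suc j))\<^sup>2)" "\<bar>\<rho>\<bar> < 1"
  defines "c \<equiv> 2 / (1 - \<bar>\<rho>\<bar>)"
  defines "T \<equiv> c\<^sup>2 * (\<Sum>j. (\<beta> (Suc j))\<^sup>2)"
  shows "\<bar>tripleSum \<beta> \<rho> p\<bar> \<le> p * c\<^sup>2 + 3 * c\<^sup>2 * T + 3 * c * T\<^sup>2 + T ^ 3"
proof -
  define w where "w i j = \<rho> ^ nat \<bar>int i - int j\<bar>" for i j :: nat
  have "0 \<le> c" using assms(2) by (simp add: c_def)
  have sym: "w i j = w j i" for i j by (simp add: w_def abs_minus_commute)
  have bounded: "\<bar>w i j\<bar> \<le> 1" for i j
    using assms(2) by (simp add: w_def power_abs power_le_one)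
  have rows: "(\<Sum>j\<in>{1..p}. \<bar>w i j\<bar>) \<le> c" for i
    unfolding w_def power_abs c_def by (rule sum_power_dist_le) (use assms(2) in auto)
  have "(\<Sum>j=1..p. (\<beta> j)\<^sup>2) = (\<Sum>j<p. (\<beta> (Suc j))\<^sup>2)"
    by (simp add: sum.atLeast1_atMost_eq)
  also have "\<dots> \<le> (\<Sum>j. (\<beta> (Suc j))\<^sup>2)"
    by (rule sum_le_suminf) (use assms(1) in auto)
  finally have "(\<Sum>k=1..p. (theta \<beta> \<rho> p k)\<^sup>2) \<le> T"
    using sum_theta_square_le[OF assms(2), of \<beta> p] unfolding T_def c_def
    by (meson mult_left_mono order.trans zero_le_power2)
  from sum_cube_rank_one_update_abs_le[OF sym bounded rows \<open>0 \<le> c\<close> this]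
  show ?thesis by (simp add: tripleSum_def w_def)
qed

theorem mainTheorem15:
  fixes \<beta> :: "nat \<Rightarrow> real" and \<rho> :: real
  assumes "summable (\<lambda>j. (\<beta> (Suc j))\<^sup>2)"
    and "\<bar>\<rho>\<bar> < 1"
  shows "(\<lambda>p. \<bar>tripleSum \<beta> \<rho> p\<bar>) \<in> o[at_top](\<lambda>p. real p powr (3/2))"
proof -
  define c where "c = 2 / (1 - \<bar>\<rho>\<bar>)"
  define T where "T = c\<^sup>2 * (\<Sum>j. (\<beta> (Suc j))\<^sup>2)"
  define K where "K = 3 * c\<^sup>2 * T + 3 * c * T\<^sup>2 + T ^ 3"
  have bound: "\<bar>tripleSum \<beta> \<rho> p\<bar> \<le> real p * c\<^sup>2 + K" for p
    using tripleSum_abs_le[OF assms, of p] by (simp add: K_def T_def c_def add.assoc)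
  have "(\<lambda>p. \<bar>tripleSum \<beta> \<rho> p\<bar>) \<in> O(\<lambda>p. real p * c\<^sup>2 + K)"
    by (intro bigoI[where c = 1] always_eventually allI)
      (use bound in \<open>auto intro: order.trans[OF _ abs_ge_self]\<close>)
  also have "(\<lambda>p. real p * c\<^sup>2 + K) \<in> o(\<lambda>p. real p powr (3/2))"
    by real_asymp
  finally show ?thesis .
qed

end
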